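(* Let $K=P(n_1,\dots,n_k)$ be a pretzel knot with its standard diagram, $n=|n_1|+\dots+|n_k|$ crossings ordered $1,\dots,n$ as described in the context, signed Tait graph $G$ (edges $e_1,\dots,e_n$ ordered by crossing number) and balanced overlaid Tait graph $\Gamma$ obtained by omitting the unbounded region $U$ and the upper deck $R_{\mathrm{top}}$. For a perfect matching $\mu$ of $\Gamma$ let $\alpha(\mu)$ be the word of length $n$ whose $j$-th letter is $\alpha(\varepsilon_j)$, where $\varepsilon_j$ is the edge of $\mu$ incident with crossing $j$. Then, as formal sums of words, $$\sum_{\mu}\alpha(\mu)=\sum_{S} a(S),$$ where $\mu$ ranges over all perfect matchings of $\Gamma$ and $S$ over all spanning trees of $G$; that is, the words $\alpha(\mu)$ give exactly the complete list (with multiplicity) of activity words of spanning trees of $G$.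
   Context: Pretzel diagram: for nonzero integers $n_1,\dots,n_k$, the diagram of $P(n_1,\dots,n_k)$ consists of $k$ vertical twist columns placed left to right, column $i$ being $|n_i|$ crossings between two strands stacked vertically; for $1\le i<k$ the top-right endpoint of column $i$ is joined to the top-left endpoint of column $i+1$ by a short arc, and likewise at the bottom; the top-left endpoint of column $1$ is joined to the top-right endpoint of column $k$ by an arc passing above everything, and likewise at the bottom by an arc passing below. Assume the diagram has one component. Its regions are: the unbounded region $U$; the upper deck $R_{\mathrm{top}}$ (bounded by the upper outer arc and the tops of the columns and top short arcs); the lower deck $R_{\mathrm{bot}}$; the $|n_i|-1$ regions inside column $i$ between consecutive crossings; and for $1\le i<k$ the region $W_i$ between columns $i$ and $i+1$. The black regions are $R_{\mathrm{top}}$, $R_{\mathrm{bot}}$ and the regions inside columns; the white regions are $U,W_1,\dots,W_{k-1}$. Crossings are numbered $1,\dots,n$: column 1 from top to bottom, then column 2 from bottom to top, then column 3 from bottom to top, and so on up to column $k$. Signed Tait graph $G$: vertices are the black regions, and each crossing gives an edge joining the two black regions at it; the edge is positive if, viewing the crossing with the two black regions above and below it, the overstrand runs from lower left to upper right, and negative otherwise. The sign of $n_i$ is, by convention, the sign of the Tait edges of the crossings in column $i$. Edge $e_j$ is the edge of crossing $j$. Tutte activity: for a spanning tree $S$ and an edge $e$ (with edges ordered $e_1<\dots<e_n$): if $e\in S$, it is $L$ (live) if $e$ is the lowest edge reconnecting $S-\{e\}$, else $D$; if $e\notin S$, it is $\ell$ if $e$ is the lowest edge in the unique cycle of $S\cup\{e\}$,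 else $d$; for negative edges use the barred letters $\overline{L},\overline{D},\overline{\ell},\overline{d}$. The activity word $a(S)$ has $j$-th letter the letter of $e_j$. Overlaid Tait graph $\widehat\Gamma$: bipartite plane graph with a vertex per crossing and a vertex per region, and for each crossing $c$ and each of its four corners an edge from $c$ to the region at that corner. $\Gamma$ is $\widehat\Gamma$ with the vertices $U$ and $R_{\mathrm{top}}$ deleted. Activity weighting: the edge $\varepsilon$ of $\Gamma$ joining crossing $c$ to region $R$ gets the letter $\alpha(\varepsilon)$ determined by: internal ($L$/$D$) if $R$ is black, external ($\ell$/$d$) if $R$ is white; live ($L$ or $\ell$) if $c$ is the lowest-numbered crossing incident with $R$, dead ($D$ or $d$) otherwise; barred if the Tait edge of $c$ is negative, unbarred if positive. *)

theory Defs
  imports Main "HOL-Library.Multiset"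
begin

text \<open>A multigraph is given by a vertex set V and an endpoint map ends; an edge f joins
  fst (ends f) and snd (ends f).  Parallel edges are allowed.\<close>

definition mg_adj :: "(nat \<Rightarrow> 'v \<times> 'v) \<Rightarrow> nat set \<Rightarrow> ('v \<times> 'v) set" where
  "mg_adj ends F = {(fst (ends f), snd (ends f)) | f. f \<in> F} \<union> {(snd (ends f), fst (ends f)) | f. f \<in> F}"

definition mg_connected :: "'v set \<Rightarrow> (nat \<Rightarrow> 'v \<times> 'v) \<Rightarrow> nat set \<Rightarrow> bool" where
  "mg_connected V ends F \<longleftrightarrow> (\<forall>u\<in>V. \<forall>v\<in>V. (u, v) \<in> (mg_adj ends F)\<^sup>*)"

definition mg_cycle :: "(nat \<Rightarrow> 'v \<times> 'v) \<Rightarrow> nat set \<Rightarrow> bool" where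
  "mg_cycle ends C \<longleftrightarrow> (\<exists>es vs. es \<noteq> [] \<and> distinct es \<and> set es = C \<and> length vs = length es \<and> distinct vs \<and>
     (\<forall>i<length es. ends (es ! i) = (vs ! i, vs ! ((i + 1) mod length es))
                   \<or> ends (es ! i) = (vs ! ((i + 1) mod length es), vs ! i)))"

definition mg_spanning_tree :: "'v set \<Rightarrow> nat set \<Rightarrow> (nat \<Rightarrow> 'v \<times> 'v) \<Rightarrow> nat set \<Rightarrow> bool" where
  "mg_spanning_tree V E ends S \<longleftrightarrow> S \<subseteq> E \<and> mg_connected V ends S \<and> \<not> (\<exists>C\<subseteq>S. mg_cycle ends C)"

text \<open>A letter is determined by: internal (L/D) vs external (l/d); live (L/l) vs dead (D/d);
  barred (negative) vs unbarred.  So L = Letter True True False, \<open>D\<close> = Letter True False False,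
  l = Letter False True False, d = Letter False False False, barred versions with last field True.\<close>
datatype letter = Letter (internal: bool) (live: bool) (barred: bool)

text \<open>Tutte activity letter of edge e w.r.t. spanning tree S (edges ordered by \<le> on nat);
  neg e says whether e is a negative edge.\<close>
definition tutte_letter :: "'v set \<Rightarrow> nat set \<Rightarrow> (nat \<Rightarrow> 'v \<times> 'v) \<Rightarrow> (nat \<Rightarrow> bool) \<Rightarrow> nat set \<Rightarrow> nat \<Rightarrow> letter" where
  "tutte_letter V E ends neg S e =
     (if e \<in> S
      then Letter True (e = Min {f \<in> E. mg_connected V ends (insert f (S - {e}))}) (neg e)
      else Letter False (e = Min (THE C. C \<subseteq> insert e S \<and> mg_cycle ends C)) (neg e))"

text \<open>Columns are indexed 0..k-1 (column i here is column i+1 of the paper); crossings within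
  a column are indexed by position p = 0..|n_i|-1 counted from the top.\<close>

definition pcols :: "int list \<Rightarrow> nat" where "pcols ns = length ns"

definition csize :: "int list \<Rightarrow> nat \<Rightarrow> nat" where "csize ns i = nat \<bar>ns ! i\<bar>"

definition ncross :: "int list \<Rightarrow> nat" where "ncross ns = (\<Sum>i<length ns. csize ns i)"

definition coffset :: "int list \<Rightarrow> nat \<Rightarrow> nat" where "coffset ns i = (\<Sum>j<i. csize ns j)"

text \<open>Crossing number of crossing at position p of column i: the first column is numbered
  top to bottom, every later column bottom to top, consecutively.\<close>
definition cnum :: "int list \<Rightarrow> nat \<Rightarrow> nat \<Rightarrow> nat" where
  "cnum ns i p = (if i = 0 then p + 1 else coffset ns i + (csize ns i - p))"

definition cloc :: "int list \<Rightarrow> nat \<Rightarrow> nat \<times> nat" where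
  "cloc ns j = (THE (i, p). i < pcols ns \<and> p < csize ns i \<and> cnum ns i p = j)"

datatype region = U | Rtop | Rbot | Inside nat nat | W nat
  \<comment> \<open>Inside i p: region inside column i between positions p and p+1;
      W i: white region between columns i and i+1.\<close>

definition black_regions :: "int list \<Rightarrow> region set" where
  "black_regions ns = {Rtop, Rbot} \<union> {Inside i p | i p. i < pcols ns \<and> p + 1 < csize ns i}"

definition white_regions :: "int list \<Rightarrow> region set" where
  "white_regions ns = {U} \<union> {W i | i. i + 1 < pcols ns}"

definition regions :: "int list \<Rightarrow> region set" where
  "regions ns = black_regions ns \<union> white_regions ns"

datatype corner = Above | Below | Left | Right

definition corner_reg :: "int list \<Rightarrow> nat \<Rightarrow> nat \<Rightarrow> corner \<Rightarrow> region" where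
  "corner_reg ns i p c = (case c of
      Above \<Rightarrow> (if p = 0 then Rtop else Inside i (p - 1))
    | Below \<Rightarrow> (if p + 1 = csize ns i then Rbot else Inside i p)
    | Left \<Rightarrow> (if i = 0 then U else W (i - 1))
    | Right \<Rightarrow> (if i + 1 = pcols ns then U else W i))"

definition creg :: "int list \<Rightarrow> nat \<Rightarrow> corner \<Rightarrow> region" where
  "creg ns j c = (case cloc ns j of (i, p) \<Rightarrow> corner_reg ns i p c)"

definition neg_cross :: "int list \<Rightarrow> nat \<Rightarrow> bool" where
  "neg_cross ns j = (ns ! fst (cloc ns j) < 0)"

datatype endpt = TL | TR | BL | BR

definition col_ends :: "int list \<Rightarrow> (nat \<times> endpt) set" where
  "col_ends ns = {(i, x) | i x. i < pcols ns}"

text \<open>Arcs of the diagram joining column endpoints: strands through a twist column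
  (with an odd number of crossings TL-BR and TR-BL, else TL-BL and TR-BR), the short arcs
  between neighbouring columns, and the two outer arcs.\<close>
definition strand_links :: "int list \<Rightarrow> ((nat \<times> endpt) \<times> (nat \<times> endpt)) set" where
  "strand_links ns =
     {((i, TL), (i, if odd (csize ns i) then BR else BL)) | i. i < pcols ns}
   \<union> {((i, TR), (i, if odd (csize ns i) then BL else BR)) | i. i < pcols ns}
   \<union> {((i, TR), (i + 1, TL)) | i. i + 1 < pcols ns}
   \<union> {((i, BR), (i + 1, BL)) | i. i + 1 < pcols ns}
   \<union> {((0, TL), (pcols ns - 1, TR)), ((0, BL), (pcols ns - 1, BR))}"

definition one_component :: "int list \<Rightarrow> bool" where
  "one_component ns \<longleftrightarrow>
     (\<forall>a\<in>col_ends ns. \<forall>b\<in>col_ends ns. (a, b) \<in> (strand_links ns \<union> (strand_links ns)\<inverse>)\<^sup>*)"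

definition tait_ends :: "int list \<Rightarrow> nat \<Rightarrow> region \<times> region" where
  "tait_ends ns j = (creg ns j Above, creg ns j Below)"

definition tait_spanning_trees :: "int list \<Rightarrow> nat set set" where
  "tait_spanning_trees ns =
     {S. mg_spanning_tree (black_regions ns) {1..ncross ns} (tait_ends ns) S}"

definition activity_word :: "int list \<Rightarrow> nat set \<Rightarrow> letter list" where
  "activity_word ns S =
     map (tutte_letter (black_regions ns) {1..ncross ns} (tait_ends ns) (neg_cross ns) S) [1..<ncross ns + 1]"

text \<open>Edges of Gamma-hat are pairs (crossing j, corner c); Gamma deletes U and Rtop.\<close>
definition gamma_edges :: "int list \<Rightarrow> (nat \<times> corner) set" where
  "gamma_edges ns = {(j, c) | j c. j \<in> {1..ncross ns} \<and> creg ns j c \<notin> {U, Rtop}}"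

definition gamma_region_vertices :: "int list \<Rightarrow> region set" where
  "gamma_region_vertices ns = regions ns - {U, Rtop}"

definition perfect_matchings :: "int list \<Rightarrow> (nat \<times> corner) set set" where
  "perfect_matchings ns =
     {M. M \<subseteq> gamma_edges ns
       \<and> (\<forall>j\<in>{1..ncross ns}. \<exists>!c. (j, c) \<in> M)
       \<and> (\<forall>R\<in>gamma_region_vertices ns. \<exists>!e. e \<in> M \<and> creg ns (fst e) (snd e) = R)}"

definition alpha_edge :: "int list \<Rightarrow> nat \<times> corner \<Rightarrow> letter" where
  "alpha_edge ns e = (case e of (j, c) \<Rightarrow>
      (let R = creg ns j c in
       Letter (R \<in> black_regions ns)
              (j = Min {j' \<in> {1..ncross ns}. \<exists>c'. creg ns j' c' = R})
              (neg_cross ns j)))"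

definition alpha_word :: "int list \<Rightarrow> (nat \<times> corner) set \<Rightarrow> letter list" where
  "alpha_word ns M = map (\<lambda>j. alpha_edge ns (j, THE c. (j, c) \<in> M)) [1..<ncross ns + 1]"

end

theory Submission
  imports Defs
begin

text \<open>The Tait graph of the pretzel diagram is a generalised theta graph: column i is a path
  of |n_i| edges from the upper deck to the lower deck. A spanning tree therefore contains one
  whole column m and omits exactly one edge r i from every other column. The same data (m, r)
  parametrise the perfect matchings of Gamma: in column i the crossings above r i are matched
  to the region below them, those below r i to the region above them, and the crossing r i is
  matched to the lower deck if i = m and otherwise sideways to the white region facing column m.
  Computing both letters of a crossing from (m, r) -- via reconnecting edges and fundamental
  cycles for the tree, via the lowest-numbered crossing around each region for the matching --
  yields the same letter, so the two lists of words coincide.\<close>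

section \<open>Multigraphs\<close>

lemma mg_adj_edgeI:
  assumes "f \<in> F"
  shows "(fst (ends f), snd (ends f)) \<in> mg_adj ends F" and "(snd (ends f), fst (ends f)) \<in> mg_adj ends F"
  using assms unfolding mg_adj_def by blast+

lemma sym_mg_adj: "sym (mg_adj ends F)"
  unfolding mg_adj_def sym_def by blast

lemma mg_adj_rtrancl_sym: "(a, b) \<in> (mg_adj ends F)\<^sup>* \<Longrightarrow> (b, a) \<in> (mg_adj ends F)\<^sup>*"
  using symD[OF sym_rtrancl[OF sym_mg_adj]] .

lemma mg_adj_rtrancl_closed:
  assumes closed: "\<forall>f\<in>F. fst (ends f) \<in> X \<longleftrightarrow> snd (ends f) \<in> X"
    and "(a, b) \<in> (mg_adj ends F)\<^sup>*"
  shows "a \<in> X \<longleftrightarrow> b \<in> X"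
  using assms(2)
proof (induction rule: rtrancl_induct)
  case (step y z)
  then obtain f where "f \<in> F" "(y, z) = (fst (ends f), snd (ends f)) \<or> (y, z) = (snd (ends f), fst (ends f))"
    unfolding mg_adj_def by auto
  with closed have "y \<in> X \<longleftrightarrow> z \<in> X" by (auto simp: prod_eq_iff)
  with step.IH show ?case by simp
qed simp

lemma rtrancl_chain:
  assumes "\<And>s. j \<le> s \<Longrightarrow> s < k \<Longrightarrow> (x s, x (Suc s)) \<in> R" and "j \<le> k"
  shows "(x j, x k) \<in> R\<^sup>*"
  using assms
proof (induction k)
  case (Suc k)
  then show ?case
    by (cases "j = Suc k") (auto intro: rtrancl_into_rtrancl)
qed simp

lemma mg_cycleI:
  assumes "0 < L" "inj_on e {..<L}" "inj_on v {..<L}" "e ` {..<L} = C"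
    and "\<forall>s<L. ends (e s) = (v s, v (Suc s mod L)) \<or> ends (e s) = (v (Suc s mod L), v s)"
  shows "mg_cycle ends C"
  unfolding mg_cycle_def
proof (intro exI conjI)
  show "map e [0..<L] \<noteq> []" "distinct (map e [0..<L])" "set (map e [0..<L]) = C"
    "length (map v [0..<L]) = length (map e [0..<L])" "distinct (map v [0..<L])"
    using assms(1-4) by (auto simp: distinct_map atLeast0LessThan)
qed (use assms(5) in auto)

lemma mg_cycle_nonempty: "mg_cycle ends C \<Longrightarrow> C \<noteq> {}"
  unfolding mg_cycle_def by auto

text \<open>Walk once around the cycle, starting just after f and stopping just before it.\<close>
lemma mg_cycle_edge_reconnected:
  assumes "mg_cycle ends C" "f \<in> C"
  shows "(fst (ends f), snd (ends f)) \<in> (mg_adj ends (C - {f}))\<^sup>*"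
proof -
  obtain es vs where es: "es \<noteq> []" "distinct es" "set es = C" "length vs = length es"
    and ends: "\<forall>s<length es. ends (es ! s) = (vs ! s, vs ! ((s + 1) mod length es))
                   \<or> ends (es ! s) = (vs ! ((s + 1) mod length es), vs ! s)"
    using assms(1) unfolding mg_cycle_def by blast
  define L where "L = length es"
  define R where "R = mg_adj ends (C - {f})"
  define x where "x s = vs ! (s mod L)" for s
  obtain i where i: "i < L" "es ! i = f"
    using assms(2) es(3) unfolding L_def by (metis in_set_conv_nth)
  have step: "(x s, x (Suc s)) \<in> R" if "s mod L \<noteq> i" for s
  proof -
    have L: "0 < L" using es(1) by (simp add: L_def)
    have "es ! (s mod L) \<in> C - {f}"
      using that i es(2,3) L nth_eq_iff_index_eq[OF es(2), of "s mod L" i] by (auto simp: L_def)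
    moreover have "(s mod L + 1) mod L = Suc s mod L"
      by (simp add: mod_Suc_eq)
    ultimately show ?thesis
      using ends[rule_format, of "s mod L"] mg_adj_edgeI[of "es ! (s mod L)" "C - {f}" ends] L
      by (auto simp: R_def x_def L_def)
  qed
  have "(x (i + 1), x (i + L)) \<in> R\<^sup>*"
  proof (rule rtrancl_chain)
    fix s assume "i + 1 \<le> s" "s < i + L"
    then have "s mod L \<noteq> i"
      using i(1) by (cases "s < L") (auto simp: le_mod_geq)
    then show "(x s, x (Suc s)) \<in> R" by (rule step)
  qed (use i in simp)
  then have "(vs ! ((i + 1) mod L), vs ! i) \<in> R\<^sup>*"
    using i(1) by (simp add: x_def)
  moreover have "ends f = (vs ! i, vs ! ((i + 1) mod L)) \<or> ends f = (vs ! ((i + 1) mod L), vs ! i)"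
    using ends i by (auto simp: L_def)
  ultimately show ?thesis
    unfolding R_def using mg_adj_rtrancl_sym by fastforce
qed

section \<open>Columns of the pretzel diagram\<close>

locale pretzel_diagram =
  fixes ns :: "int list"
  assumes nonempty: "ns \<noteq> []"
    and nonzero: "\<forall>x\<in>set ns. x \<noteq> 0"
begin

lemma csize_pos: "i < length ns \<Longrightarrow> 0 < csize ns i"
  using nonzero unfolding csize_def by (auto simp: nth_mem)

lemma coffset_Suc: "coffset ns (Suc i) = coffset ns i + csize ns i"
  by (simp add: coffset_def)

lemma coffset_add_csize_le: "i < i' \<Longrightarrow> coffset ns i + csize ns i \<le> coffset ns i'"
proof (induction i')
  case (Suc i')
  then show ?case by (cases "i = i'") (auto simp: coffset_Suc)
qed simp

lemma ncross_eq_coffset: "ncross ns = coffset ns (length ns)"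
  by (simp add: ncross_def coffset_def)

lemma cnum_bounds:
  "p < csize ns i \<Longrightarrow> coffset ns i < cnum ns i p \<and> cnum ns i p \<le> coffset ns i + csize ns i"
  by (auto simp: cnum_def coffset_def)

lemma cnum_less_cnum_column:
  assumes "i < i'" "p < csize ns i" "p' < csize ns i'"
  shows "cnum ns i p < cnum ns i' p'"
  using cnum_bounds[OF assms(2)] cnum_bounds[OF assms(3)] coffset_add_csize_le[OF assms(1)] by linarith

lemma cnum_le_cnum_same_column:
  assumes "p < csize ns i" "p' < csize ns i"
  shows "cnum ns i p \<le> cnum ns i p' \<longleftrightarrow> (if i = 0 then p \<le> p' else p' \<le> p)"
  using assms by (auto simp: cnum_def)

lemma cnum_eq_iff:
  assumes "p < csize ns i" "p' < csize ns i'"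
  shows "cnum ns i p = cnum ns i' p' \<longleftrightarrow> i = i' \<and> p = p'"
proof
  assume eq: "cnum ns i p = cnum ns i' p'"
  then have "i = i'"
    using cnum_less_cnum_column[of i i' p p'] cnum_less_cnum_column[of i' i p' p] assms
    by (metis less_irrefl nat_neq_iff)
  with eq assms show "i = i' \<and> p = p'" by (auto simp: cnum_def split: if_splits)
qed simp

lemma cnum_mem_crossings:
  assumes "i < length ns" "p < csize ns i"
  shows "cnum ns i p \<in> {1..ncross ns}"
proof -
  have "coffset ns i + csize ns i \<le> ncross ns"
    using coffset_add_csize_le[of i "length ns"] assms(1)
    by (cases "Suc i = length ns") (auto simp: ncross_eq_coffset coffset_Suc[symmetric])
  then show ?thesis using cnum_bounds[OF assms(2)] by auto
qed

lemma crossing_below_coffset_cnum: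
  "i \<le> length ns \<Longrightarrow> 1 \<le> j \<Longrightarrow> j \<le> coffset ns i \<Longrightarrow> \<exists>i'<i. \<exists>p<csize ns i'. j = cnum ns i' p"
proof (induction i)
  case (Suc i)
  show ?case
  proof (cases "j \<le> coffset ns i")
    case True then show ?thesis using Suc by (meson Suc_leD less_SucI)
  next
    case False
    then have "coffset ns i < j" "j \<le> coffset ns i + csize ns i" using Suc by (auto simp: coffset_Suc)
    then show ?thesis using Suc.prems
      by (intro exI[of _ i]) (auto simp: cnum_def coffset_def
          intro!: exI[of _ "if i = 0 then j - 1 else coffset ns i + csize ns i - j"])
  qed
qed (simp add: coffset_def)

lemma crossing_cnumE:
  assumes "j \<in> {1..ncross ns}"
  obtains i p where "i < length ns" "p < csize ns i" "j = cnum ns i p"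
  using crossing_below_coffset_cnum[of "length ns" j] assms by (auto simp: ncross_eq_coffset)

lemma cloc_cnum: "i < length ns \<Longrightarrow> p < csize ns i \<Longrightarrow> cloc ns (cnum ns i p) = (i, p)"
  unfolding cloc_def pcols_def by (rule the_equality) (auto simp: cnum_eq_iff)

lemma creg_cnum: "i < length ns \<Longrightarrow> p < csize ns i \<Longrightarrow> creg ns (cnum ns i p) c = corner_reg ns i p c"
  by (simp add: creg_def cloc_cnum)

lemma neg_cross_cnum: "i < length ns \<Longrightarrow> p < csize ns i \<Longrightarrow> neg_cross ns (cnum ns i p) \<longleftrightarrow> ns ! i < 0"
  by (simp add: neg_cross_def cloc_cnum)

text \<open>Column i is a path from Rtop to Rbot in the Tait graph; col_vertex i t is its vertex
  after t crossings counted from the top.\<close>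
definition col_vertex :: "nat \<Rightarrow> nat \<Rightarrow> region" where
  "col_vertex i t = (if t = 0 then Rtop else if t = csize ns i then Rbot else Inside i (t - 1))"

lemma col_vertex_0 [simp]: "col_vertex i 0 = Rtop"
  by (simp add: col_vertex_def)

lemma col_vertex_csize [simp]: "i < length ns \<Longrightarrow> col_vertex i (csize ns i) = Rbot"
  using csize_pos by (simp add: col_vertex_def)

lemma col_vertex_black: "i < length ns \<Longrightarrow> t \<le> csize ns i \<Longrightarrow> col_vertex i t \<in> black_regions ns"
  by (auto simp: col_vertex_def black_regions_def pcols_def)

lemma black_regionE:
  assumes "v \<in> black_regions ns"
  obtains i t where "i < length ns" "t \<le> csize ns i" "v = col_vertex i t"
proof -
  have "\<exists>i<length ns. \<exists>t\<le>csize ns i. v = col_vertex i t"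
  proof (cases "v \<in> {Rtop, Rbot}")
    case True
    have "Rtop = col_vertex 0 0" "Rbot = col_vertex 0 (csize ns 0)" "0 < length ns"
      using nonempty by simp_all
    with True show ?thesis by (metis empty_iff insertE le0 le_refl)
  next
    case False
    with assms obtain i p where "v = Inside i p" "i < length ns" "p + 1 < csize ns i"
      by (auto simp: black_regions_def pcols_def)
    then have "v = col_vertex i (Suc p)" "Suc p \<le> csize ns i" by (auto simp: col_vertex_def)
    with \<open>i < length ns\<close> show ?thesis by blast
  qed
  with that show ?thesis by blast
qed

lemma col_vertex_eq_iff:
  assumes "i < length ns" "i' < length ns" "t \<le> csize ns i" "t' \<le> csize ns i'"
  shows "col_vertex i t = col_vertex i' t' \<longleftrightarrow>
    (t = 0 \<and> t' = 0) \<or> (t = csize ns i \<and> t' = csize ns i') \<or> (i = i' \<and> t = t')"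
  using assms csize_pos by (auto simp: col_vertex_def split: if_splits)

lemma tait_ends_cnum:
  "i < length ns \<Longrightarrow> p < csize ns i \<Longrightarrow> tait_ends ns (cnum ns i p) = (col_vertex i p, col_vertex i (Suc p))"
  by (simp add: tait_ends_def creg_cnum corner_reg_def col_vertex_def)

lemma tait_edge_disconnected:
  assumes "(col_vertex i p, col_vertex i (Suc p)) \<notin> (mg_adj (tait_ends ns) F)\<^sup>*"
    and "i < length ns" "p < csize ns i"
  shows "\<not> mg_connected (black_regions ns) (tait_ends ns) F"
  using assms col_vertex_black[of i p] col_vertex_black[of i "Suc p"] unfolding mg_connected_def by auto

text \<open>The vertices above the cuts form a union of components.\<close>
lemma column_cuts_separate:
  assumes F: "F \<subseteq> {1..ncross ns}" and cut: "\<forall>i<length ns. p i < csize ns i \<and> cnum ns i (p i) \<notin> F"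
    and conn: "(col_vertex i t, col_vertex i' t') \<in> (mg_adj (tait_ends ns) F)\<^sup>*"
    and it: "i < length ns" "t \<le> csize ns i" "i' < length ns" "t' \<le> csize ns i'"
  shows "t \<le> p i \<longleftrightarrow> t' \<le> p i'"
proof -
  define X where "X = {Rtop} \<union> {Inside i t | i t. i < length ns \<and> t + 1 \<le> p i}"
  have X: "i < length ns \<Longrightarrow> t \<le> csize ns i \<Longrightarrow> col_vertex i t \<in> X \<longleftrightarrow> t \<le> p i" for i t
    using cut by (auto simp: X_def col_vertex_def)
  have "\<forall>f\<in>F. fst (tait_ends ns f) \<in> X \<longleftrightarrow> snd (tait_ends ns f) \<in> X"
  proof
    fix f assume f: "f \<in> F"
    with F obtain i s where ip: "i < length ns" "s < csize ns i" "f = cnum ns i s"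
      by (blast elim: crossing_cnumE)
    with f cut have "s \<noteq> p i" by auto
    with ip X show "fst (tait_ends ns f) \<in> X \<longleftrightarrow> snd (tait_ends ns f) \<in> X"
      by (auto simp: tait_ends_cnum)
  qed
  from mg_adj_rtrancl_closed[OF this conn] show ?thesis using X it by simp
qed

lemma column_cuts_disconnect_crossing:
  assumes "F \<subseteq> {1..ncross ns}" "\<forall>i<length ns. p i < csize ns i \<and> cnum ns i (p i) \<notin> F" "i < length ns"
  shows "(col_vertex i (p i), col_vertex i (Suc (p i))) \<notin> (mg_adj (tait_ends ns) F)\<^sup>*"
  using column_cuts_separate[OF assms(1,2), of i "p i" i "Suc (p i)"] assms(2,3) by fastforce

lemma column_cuts_disconnect_decks:
  assumes "F \<subseteq> {1..ncross ns}" "\<forall>i<length ns. p i < csize ns i \<and> cnum ns i (p i) \<notin> F"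
  shows "(Rtop, Rbot) \<notin> (mg_adj (tait_ends ns) F)\<^sup>*"
  using column_cuts_separate[OF assms, of 0 0 0 "csize ns 0"] assms(2) nonempty by fastforce

lemma two_cuts_disconnect:
  assumes F: "F \<subseteq> {1..ncross ns}" and i: "i < length ns"
    and pp': "p \<noteq> p'" "p < csize ns i" "p' < csize ns i"
    and cut: "cnum ns i p \<notin> F" "cnum ns i p' \<notin> F"
  shows "(col_vertex i p, col_vertex i (Suc p)) \<notin> (mg_adj (tait_ends ns) F)\<^sup>*"
proof
  define X where "X = {Inside i t | t. min p p' \<le> t \<and> t < max p p'}"
  have X: "i' < length ns \<Longrightarrow> t \<le> csize ns i' \<Longrightarrow>
      col_vertex i' t \<in> X \<longleftrightarrow> i' = i \<and> min p p' < t \<and> t \<le> max p p'" for i' t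
    using pp' by (auto simp: X_def col_vertex_def)
  have "\<forall>f\<in>F. fst (tait_ends ns f) \<in> X \<longleftrightarrow> snd (tait_ends ns f) \<in> X"
  proof
    fix f assume f: "f \<in> F"
    with F obtain i' s where ip: "i' < length ns" "s < csize ns i'" "f = cnum ns i' s"
      by (blast elim: crossing_cnumE)
    with f cut have "i' = i \<longrightarrow> s \<noteq> p \<and> s \<noteq> p'" by auto
    with ip X show "fst (tait_ends ns f) \<in> X \<longleftrightarrow> snd (tait_ends ns f) \<in> X"
      by (auto simp: tait_ends_cnum)
  qed
  moreover assume "(col_vertex i p, col_vertex i (Suc p)) \<in> (mg_adj (tait_ends ns) F)\<^sup>*"
  ultimately have "col_vertex i p \<in> X \<longleftrightarrow> col_vertex i (Suc p) \<in> X"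
    by (rule mg_adj_rtrancl_closed)
  with X[of i p] X[of i "Suc p"] i pp' show False
    by (simp add: min_def max_def split: if_splits)
qed

lemma column_segment_connected:
  assumes "i < length ns" "t \<le> t'" "t' \<le> csize ns i" "\<forall>s. t \<le> s \<and> s < t' \<longrightarrow> cnum ns i s \<in> F"
  shows "(col_vertex i t, col_vertex i t') \<in> (mg_adj (tait_ends ns) F)\<^sup>*"
proof (rule rtrancl_chain)
  fix s assume "t \<le> s" "s < t'"
  then show "(col_vertex i s, col_vertex i (Suc s)) \<in> mg_adj (tait_ends ns) F"
    using assms mg_adj_edgeI(1)[of "cnum ns i s" F "tait_ends ns"] tait_ends_cnum[of i s] by simp
qed (use assms in simp)

text \<open>A full column m joins the decks, and any other column missing at most one crossing
  hangs each of its vertices on a deck.\<close>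
lemma connected_if_full_column:
  assumes m: "m < length ns" "\<forall>s<csize ns m. cnum ns m s \<in> F"
    and r: "\<forall>i<length ns. \<forall>s<csize ns i. s \<noteq> r i \<longrightarrow> cnum ns i s \<in> F"
  shows "mg_connected (black_regions ns) (tait_ends ns) F"
proof -
  let ?R = "(mg_adj (tait_ends ns) F)\<^sup>*"
  have decks: "(Rtop, Rbot) \<in> ?R"
    using column_segment_connected[of m 0 "csize ns m" F] m by simp
  have "(Rtop, v) \<in> ?R" if v: "v \<in> black_regions ns" for v
  proof -
    obtain i t where it: "i < length ns" "t \<le> csize ns i" "v = col_vertex i t"
      using v by (rule black_regionE)
    show ?thesis
    proof (cases "t \<le> r i")
      case True
      then show ?thesis using column_segment_connected[of i 0 t F] it r by simp
    next
      case False
      then have "(v, Rbot) \<in> ?R" using column_segment_connected[of i t "csize ns i" F] it r by simp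
      then show ?thesis using decks mg_adj_rtrancl_sym by (metis rtrancl_trans)
    qed
  qed
  then show ?thesis
    unfolding mg_connected_def using mg_adj_rtrancl_sym by (metis rtrancl_trans)
qed

section \<open>Spanning trees of the Tait graph\<close>

definition two_column_cycle :: "nat \<Rightarrow> nat \<Rightarrow> nat set" where
  "two_column_cycle a b = {cnum ns a s | s. s < csize ns a} \<union> {cnum ns b s | s. s < csize ns b}"

lemma two_column_cycle_commute: "two_column_cycle a b = two_column_cycle b a"
  by (auto simp: two_column_cycle_def)

text \<open>Down column a from Rtop to Rbot, then up column b.\<close>
lemma two_column_cycle_is_cycle:
  assumes ab: "a < length ns" "b < length ns" "a \<noteq> b"
  shows "mg_cycle (tait_ends ns) (two_column_cycle a b)"
proof -
  define L where "L = csize ns a + csize ns b"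
  have pos: "0 < csize ns a" "0 < csize ns b" using csize_pos ab by auto
  define e where "e s = (if s < csize ns a then cnum ns a s else cnum ns b (L - 1 - s))" for s
  define v where "v s = (if s < csize ns a then col_vertex a s else col_vertex b (L - s))" for s
  have "inj_on e {..<L}"
    using ab by (auto simp: inj_on_def e_def L_def cnum_eq_iff split: if_splits)
  moreover have "inj_on v {..<L}"
    using ab pos by (auto simp: inj_on_def v_def L_def col_vertex_eq_iff split: if_splits)
  moreover have "e ` {..<L} = two_column_cycle a b"
  proof
    show "e ` {..<L} \<subseteq> two_column_cycle a b" by (auto simp: e_def two_column_cycle_def L_def)
    show "two_column_cycle a b \<subseteq> e ` {..<L}"
    proof
      fix x assume "x \<in> two_column_cycle a b"
      then consider s where "s < csize ns a" "x = cnum ns a s" | s where "s < csize ns b" "x = cnum ns b s"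
        unfolding two_column_cycle_def by blast
      then show "x \<in> e ` {..<L}"
      proof cases
        case 1 then show ?thesis by (intro image_eqI[of _ _ s]) (auto simp: e_def L_def)
      next
        case 2 then show ?thesis by (intro image_eqI[of _ _ "L - 1 - s"]) (auto simp: e_def L_def)
      qed
    qed
  qed
  moreover have "tait_ends ns (e s) = (v s, v (Suc s mod L)) \<or> tait_ends ns (e s) = (v (Suc s mod L), v s)"
    if s: "s < L" for s
  proof (cases "s < csize ns a")
    case True
    then have "v (Suc s mod L) = col_vertex a (Suc s)"
      using ab pos by (cases "Suc s = csize ns a") (auto simp: v_def L_def)
    with True ab show ?thesis by (simp add: e_def v_def tait_ends_cnum)
  next
    case False
    then have "v (Suc s mod L) = col_vertex b (L - 1 - s)"
      using ab pos s by (cases "Suc s = L") (auto simp: v_def L_def)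
    moreover have "v s = col_vertex b (Suc (L - 1 - s))"
      using False s by (auto simp: v_def L_def Suc_diff_Suc)
    ultimately show ?thesis using False s ab by (simp add: e_def tait_ends_cnum L_def)
  qed
  ultimately show ?thesis using pos by (intro mg_cycleI) (auto simp: L_def)
qed

text \<open>A configuration (m, r) consists of a distinguished column m and a position r i in every
  column; r is normalised at m and outside the columns, so that configurations parametrise
  spanning trees and perfect matchings bijectively.\<close>
definition configs :: "(nat \<times> (nat \<Rightarrow> nat)) set" where
  "configs = {(m, r). m < length ns \<and> (\<forall>i<length ns. r i < csize ns i) \<and> r m = csize ns m - 1
                 \<and> (\<forall>i\<ge>length ns. r i = 0)}"

definition config_tree :: "nat \<Rightarrow> (nat \<Rightarrow> nat) \<Rightarrow> nat set" where
  "config_tree m r = {cnum ns i p | i p. i < length ns \<and> p < csize ns i \<and> (i = m \<or> p \<noteq> r i)}"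

lemma configsD:
  assumes "(m, r) \<in> configs"
  shows "m < length ns" "i < length ns \<Longrightarrow> r i < csize ns i" "r m = csize ns m - 1"
  using assms by (auto simp: configs_def)

lemma cnum_mem_config_tree_iff:
  "i < length ns \<Longrightarrow> p < csize ns i \<Longrightarrow> cnum ns i p \<in> config_tree m r \<longleftrightarrow> i = m \<or> p \<noteq> r i"
  unfolding config_tree_def using cnum_eq_iff by blast

lemma config_tree_subset: "config_tree m r \<subseteq> {1..ncross ns}"
  unfolding config_tree_def using cnum_mem_crossings by blast

text \<open>A cycle cannot cross a cut only once.\<close>
lemma cycle_two_cuts_in_column:
  assumes C: "mg_cycle (tait_ends ns) C" "C \<subseteq> {1..ncross ns}"
    and "i < length ns" "p < csize ns i" "p' < csize ns i" "p' \<noteq> p"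
    and "cnum ns i p \<in> C" "cnum ns i p' \<notin> C"
  shows False
proof -
  have "(col_vertex i p, col_vertex i (Suc p)) \<in> (mg_adj (tait_ends ns) (C - {cnum ns i p}))\<^sup>*"
    using mg_cycle_edge_reconnected[OF C(1) assms(7)] assms(3,4) by (simp add: tait_ends_cnum)
  moreover have "C - {cnum ns i p} \<subseteq> {1..ncross ns}" using C(2) by blast
  ultimately show False
    using two_cuts_disconnect[of "C - {cnum ns i p}" i p p'] assms(3-8) by auto
qed

lemma cycle_cuts_in_all_columns:
  assumes C: "mg_cycle (tait_ends ns) C" "C \<subseteq> {1..ncross ns}"
    and q: "\<forall>i'<length ns. q i' < csize ns i' \<and> (i' \<noteq> i \<longrightarrow> cnum ns i' (q i') \<notin> C)"
    and i: "i < length ns" "cnum ns i (q i) \<in> C"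
  shows False
proof -
  have "(col_vertex i (q i), col_vertex i (Suc (q i))) \<in> (mg_adj (tait_ends ns) (C - {cnum ns i (q i)}))\<^sup>*"
    using mg_cycle_edge_reconnected[OF C(1) i(2)] i(1) q by (simp add: tait_ends_cnum)
  moreover have "\<forall>i'<length ns. q i' < csize ns i' \<and> cnum ns i' (q i') \<notin> C - {cnum ns i (q i)}"
    using q by auto
  moreover have "C - {cnum ns i (q i)} \<subseteq> {1..ncross ns}" using C(2) by blast
  ultimately show False using column_cuts_disconnect_crossing i(1) by blast
qed

lemma config_tree_spanning:
  assumes c: "(m, r) \<in> configs"
  shows "mg_spanning_tree (black_regions ns) {1..ncross ns} (tait_ends ns) (config_tree m r)"
proof -
  let ?S = "config_tree m r"
  have m: "m < length ns" and r: "\<And>i. i < length ns \<Longrightarrow> r i < csize ns i"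
    using configsD(1,2)[OF c] by blast+
  have "mg_connected (black_regions ns) (tait_ends ns) ?S"
    by (rule connected_if_full_column[of m _ r]) (use m cnum_mem_config_tree_iff in auto)
  moreover have False if C: "C \<subseteq> ?S" "mg_cycle (tait_ends ns) C" for C
  proof -
    have CE: "C \<subseteq> {1..ncross ns}" using C(1) config_tree_subset by blast
    obtain f where f: "f \<in> C" using mg_cycle_nonempty[OF C(2)] by blast
    then obtain i p where ip: "i < length ns" "p < csize ns i" "f = cnum ns i p"
      using CE by (blast elim: crossing_cnumE)
    show False
    proof (cases "i = m")
      case False
      then have "p \<noteq> r i" "cnum ns i (r i) \<notin> C"
        using cnum_mem_config_tree_iff[of i _ m r] ip r f C(1) by auto
      with cycle_two_cuts_in_column[OF C(2) CE ip(1,2)] r ip f show False by auto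
    next
      case True
      have "\<forall>i'<length ns. (r(m := p)) i' < csize ns i' \<and> (i' \<noteq> m \<longrightarrow> cnum ns i' ((r(m := p)) i') \<notin> C)"
        using cnum_mem_config_tree_iff[of _ _ m r] r ip True C(1) by auto
      from cycle_cuts_in_all_columns[OF C(2) CE this] ip True f show False by simp
    qed
  qed
  ultimately show ?thesis
    unfolding mg_spanning_tree_def using config_tree_subset by blast
qed

lemma spanning_tree_full_column:
  assumes "mg_spanning_tree (black_regions ns) {1..ncross ns} (tait_ends ns) S"
  shows "\<exists>m<length ns. \<forall>s<csize ns m. cnum ns m s \<in> S"
proof (rule ccontr)
  assume "\<not> ?thesis"
  then have "\<forall>i<length ns. \<exists>p. p < csize ns i \<and> cnum ns i p \<notin> S" by auto
  then have "\<exists>p. \<forall>i<length ns. p i < csize ns i \<and> cnum ns i (p i) \<notin> S" by metis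
  then obtain p where p: "\<forall>i<length ns. p i < csize ns i \<and> cnum ns i (p i) \<notin> S" by blast
  have F: "S \<subseteq> {1..ncross ns}" and conn: "mg_connected (black_regions ns) (tait_ends ns) S"
    using assms by (simp_all add: mg_spanning_tree_def)
  from column_cuts_disconnect_decks[OF F p] conn show False
    by (simp add: mg_connected_def black_regions_def)
qed

lemma spanning_tree_misses_crossing:
  assumes S: "mg_spanning_tree (black_regions ns) {1..ncross ns} (tait_ends ns) S"
    and m: "m < length ns" "\<forall>s<csize ns m. cnum ns m s \<in> S" and i: "i < length ns" "i \<noteq> m"
  shows "\<exists>p<csize ns i. cnum ns i p \<notin> S"
proof (rule ccontr)
  assume "\<not> ?thesis"
  then have "two_column_cycle m i \<subseteq> S" using m unfolding two_column_cycle_def by auto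
  with S two_column_cycle_is_cycle[OF m(1) i(1)] i(2) show False
    unfolding mg_spanning_tree_def by blast
qed

lemma spanning_tree_misses_at_most_one:
  assumes S: "mg_spanning_tree (black_regions ns) {1..ncross ns} (tait_ends ns) S"
    and "i < length ns" "p < csize ns i" "p' < csize ns i" "cnum ns i p \<notin> S" "cnum ns i p' \<notin> S"
  shows "p = p'"
proof (rule ccontr)
  assume "p \<noteq> p'"
  from S have "S \<subseteq> {1..ncross ns}" by (simp add: mg_spanning_tree_def)
  from two_cuts_disconnect[OF this assms(2) \<open>p \<noteq> p'\<close> assms(3-6)] assms(2,3)
  have "\<not> mg_connected (black_regions ns) (tait_ends ns) S"
    by (rule tait_edge_disconnected)
  with S show False by (simp add: mg_spanning_tree_def)
qed

lemma spanning_tree_config: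
  assumes S: "mg_spanning_tree (black_regions ns) {1..ncross ns} (tait_ends ns) S"
  shows "\<exists>(m, r)\<in>configs. S = config_tree m r"
proof -
  obtain m where m: "m < length ns" "\<forall>s<csize ns m. cnum ns m s \<in> S"
    using spanning_tree_full_column[OF S] by blast
  define r where "r i = (if i < length ns \<and> i \<noteq> m then (SOME p. p < csize ns i \<and> cnum ns i p \<notin> S)
                         else if i = m then csize ns m - 1 else 0)" for i
  have r: "r i < csize ns i \<and> cnum ns i (r i) \<notin> S" if "i < length ns" "i \<noteq> m" for i
    using someI_ex[OF spanning_tree_misses_crossing[OF S m that]] that by (simp add: r_def)
  have "(m, r) \<in> configs"
    using m r csize_pos by (auto simp: configs_def r_def)
  moreover have "S = config_tree m r"
  proof (intro equalityI subsetI)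
    fix x assume x: "x \<in> S"
    with S obtain i p where ip: "i < length ns" "p < csize ns i" "x = cnum ns i p"
      unfolding mg_spanning_tree_def by (blast elim: crossing_cnumE)
    with r x have "i = m \<or> p \<noteq> r i" by blast
    with ip show "x \<in> config_tree m r" using cnum_mem_config_tree_iff by blast
  next
    fix x assume "x \<in> config_tree m r"
    then obtain i p where ip: "i < length ns" "p < csize ns i" "x = cnum ns i p" "i = m \<or> p \<noteq> r i"
      unfolding config_tree_def by blast
    with m r spanning_tree_misses_at_most_one[OF S ip(1,2), of "r i"] show "x \<in> S" by blast
  qed
  ultimately show ?thesis by blast
qed

lemma tait_spanning_trees_eq: "tait_spanning_trees ns = (\<lambda>(m, r). config_tree m r) ` configs"
  unfolding tait_spanning_trees_def using spanning_tree_config config_tree_spanning by fastforce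

lemma inj_on_config_tree: "inj_on (\<lambda>(m, r). config_tree m r) configs"
proof (rule inj_onI, clarify)
  fix m r m' r' assume c: "(m, r) \<in> configs" "(m', r') \<in> configs"
    and eq: "config_tree m r = config_tree m' r'"
  note cD = configsD[OF c(1)] configsD[OF c(2)]
  have "m = m'"
  proof (rule ccontr)
    assume "m \<noteq> m'"
    then have "cnum ns m (r' m) \<in> config_tree m r" "cnum ns m (r' m) \<notin> config_tree m' r'"
      using cnum_mem_config_tree_iff cD by auto
    with eq show False by simp
  qed
  moreover have "r i = r' i" for i
  proof (cases "i < length ns \<and> i \<noteq> m")
    case True
    then have "cnum ns i (r i) \<notin> config_tree m' r'"
      using eq cnum_mem_config_tree_iff[of i "r i" m r] cD by auto
    with True show ?thesis using cnum_mem_config_tree_iff[of i "r i" m' r'] cD \<open>m = m'\<close> by auto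
  next
    case False
    with c \<open>m = m'\<close> show ?thesis by (auto simp: configs_def)
  qed
  ultimately show "m = m' \<and> r = r'" by (simp add: fun_eq_iff)
qed

section \<open>Tutte activities\<close>

definition lowest_position :: "nat \<Rightarrow> nat" where
  "lowest_position i = (if i = 0 then 0 else csize ns i - 1)"

lemma lowest_position_less: "i < length ns \<Longrightarrow> lowest_position i < csize ns i"
  using csize_pos[of i] by (cases "i = 0") (simp_all add: lowest_position_def)

lemma cnum_column_minimal_iff:
  assumes "i < length ns" "p < csize ns i"
  shows "(\<forall>s<csize ns i. cnum ns i p \<le> cnum ns i s) \<longleftrightarrow> p = lowest_position i"
proof
  assume "\<forall>s<csize ns i. cnum ns i p \<le> cnum ns i s"
  then have "cnum ns i p \<le> cnum ns i (lowest_position i)"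
    using lowest_position_less[OF assms(1)] by blast
  with assms show "p = lowest_position i"
    using lowest_position_less[OF assms(1)]
    by (auto simp: cnum_le_cnum_same_column lowest_position_def split: if_splits)
qed (auto simp: lowest_position_def cnum_def)

definition config_live :: "nat \<Rightarrow> (nat \<Rightarrow> nat) \<Rightarrow> nat \<Rightarrow> nat \<Rightarrow> bool" where
  "config_live m r i p =
     (if i = m then m = 0 else if p < r i then i = 0 else if r i < p then i \<noteq> 0
      else i < m \<and> p = lowest_position i)"

text \<open>The letter of crossing p of column i both in the spanning tree and in the perfect
  matching of configuration (m, r).\<close>
definition config_letter :: "nat \<Rightarrow> (nat \<Rightarrow> nat) \<Rightarrow> nat \<Rightarrow> nat \<Rightarrow> letter" where
  "config_letter m r i p = Letter (i = m \<or> p \<noteq> r i) (config_live m r i p) (ns ! i < 0)"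

abbreviation reconnecting :: "nat set \<Rightarrow> nat \<Rightarrow> nat set" where
  "reconnecting S e \<equiv> {f \<in> {1..ncross ns}. mg_connected (black_regions ns) (tait_ends ns) (insert f (S - {e}))}"

lemma reconnecting_self:
  assumes "(m, r) \<in> configs" "e \<in> config_tree m r"
  shows "e \<in> reconnecting (config_tree m r) e"
proof -
  have "e \<in> {1..ncross ns}" using assms(2) config_tree_subset by blast
  with assms show ?thesis
    using config_tree_spanning[OF assms(1)] by (simp add: insert_absorb mg_spanning_tree_def)
qed

lemma reconnecting_other_column:
  assumes c: "(m, r) \<in> configs" and ip: "i < length ns" "p < csize ns i" "i \<noteq> m" "p \<noteq> r i"
  shows "reconnecting (config_tree m r) (cnum ns i p) = {cnum ns i p, cnum ns i (r i)}"
proof (intro equalityI subsetI)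
  let ?S = "config_tree m r"
  have r: "r i < csize ns i" using configsD(2)[OF c ip(1)] .
  fix y assume y: "y \<in> reconnecting ?S (cnum ns i p)"
  show "y \<in> {cnum ns i p, cnum ns i (r i)}"
  proof (rule ccontr)
    assume "y \<notin> {cnum ns i p, cnum ns i (r i)}"
    then have "cnum ns i p \<notin> insert y (?S - {cnum ns i p})" "cnum ns i (r i) \<notin> insert y (?S - {cnum ns i p})"
      using cnum_mem_config_tree_iff[of i "r i" m r] ip r by auto
    moreover have "insert y (?S - {cnum ns i p}) \<subseteq> {1..ncross ns}" using y config_tree_subset by auto
    ultimately show False
      using two_cuts_disconnect[of _ i p "r i"] tait_edge_disconnected[of i p] y ip r by blast
  qed
next
  let ?S = "config_tree m r"
  have m: "m < length ns" and r: "\<And>i. i < length ns \<Longrightarrow> r i < csize ns i" using configsD(1,2)[OF c] by blast+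
  fix y assume "y \<in> {cnum ns i p, cnum ns i (r i)}"
  moreover have "cnum ns i p \<in> ?S" using cnum_mem_config_tree_iff ip by blast
  moreover have "mg_connected (black_regions ns) (tait_ends ns) (insert (cnum ns i (r i)) (?S - {cnum ns i p}))"
    by (rule connected_if_full_column[of m _ "r(i := p)"])
      (use m ip r cnum_mem_config_tree_iff[of _ _ m r] cnum_eq_iff in auto)
  ultimately show "y \<in> reconnecting ?S (cnum ns i p)"
    using reconnecting_self[OF c] cnum_mem_crossings ip r by auto
qed

lemma reconnecting_full_column:
  assumes c: "(m, r) \<in> configs" and p: "p < csize ns m"
  shows "reconnecting (config_tree m r) (cnum ns m p) = {cnum ns i ((r(m := p)) i) | i. i < length ns}"
proof (intro equalityI subsetI)
  let ?S = "config_tree m r"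
  have m: "m < length ns" and r: "\<And>i. i < length ns \<Longrightarrow> r i < csize ns i"
    using configsD(1,2)[OF c] by blast+
  fix y assume y: "y \<in> reconnecting ?S (cnum ns m p)"
  let ?F = "insert y (?S - {cnum ns m p})"
  show "y \<in> {cnum ns i ((r(m := p)) i) | i. i < length ns}"
  proof (rule ccontr)
    assume y': "y \<notin> {cnum ns i ((r(m := p)) i) | i. i < length ns}"
    have cuts: "\<forall>i<length ns. (r(m := p)) i < csize ns i \<and> cnum ns i ((r(m := p)) i) \<notin> ?F"
    proof (intro allI impI)
      fix i assume i: "i < length ns"
      then have "y \<noteq> cnum ns i ((r(m := p)) i)" using y' by blast
      moreover have "i \<noteq> m \<Longrightarrow> cnum ns i (r i) \<notin> ?S"
        using i r cnum_mem_config_tree_iff[of i "r i" m r] by auto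
      ultimately show "(r(m := p)) i < csize ns i \<and> cnum ns i ((r(m := p)) i) \<notin> ?F"
        using i r p by (cases "i = m") simp_all
    qed
    have F: "?F \<subseteq> {1..ncross ns}" using y config_tree_subset by auto
    from column_cuts_disconnect_crossing[OF F cuts m] m p
    have "\<not> mg_connected (black_regions ns) (tait_ends ns) ?F"
      by (intro tait_edge_disconnected) simp_all
    with y show False by simp
  qed
next
  let ?S = "config_tree m r"
  have m: "m < length ns" and r: "\<And>i. i < length ns \<Longrightarrow> r i < csize ns i"
    using configsD(1,2)[OF c] by blast+
  fix y assume "y \<in> {cnum ns i ((r(m := p)) i) | i. i < length ns}"
  then obtain i where i: "i < length ns" "y = cnum ns i ((r(m := p)) i)" by blast
  show "y \<in> reconnecting ?S (cnum ns m p)"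
  proof (cases "i = m")
    case True
    then show ?thesis using i reconnecting_self[OF c] cnum_mem_config_tree_iff m p by simp
  next
    case False
    have "\<forall>s<csize ns i. cnum ns i s \<in> insert y (?S - {cnum ns m p})"
      using i False m p r cnum_mem_config_tree_iff[of i _ m r] cnum_eq_iff[of _ i p m] by auto
    moreover have "\<forall>i'<length ns. \<forall>s<csize ns i'. s \<noteq> (r(m := p)) i' \<longrightarrow> cnum ns i' s \<in> insert y (?S - {cnum ns m p})"
      using m p cnum_mem_config_tree_iff[of _ _ m r] cnum_eq_iff by auto
    ultimately have "mg_connected (black_regions ns) (tait_ends ns) (insert y (?S - {cnum ns m p}))"
      using i(1) by (intro connected_if_full_column)
    with i False show ?thesis using cnum_mem_crossings r by auto
  qed
qed

lemma cycle_in_two_columns_is_two_column_cycle: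
  assumes ab: "a < length ns" "b < length ns" "a \<noteq> b"
    and C: "mg_cycle (tait_ends ns) C" "C \<subseteq> two_column_cycle a b"
  shows "C = two_column_cycle a b"
proof (rule ccontr)
  have CE: "C \<subseteq> {1..ncross ns}"
    using C(2) ab cnum_mem_crossings unfolding two_column_cycle_def by blast
  assume "C \<noteq> two_column_cycle a b"
  with C(2) obtain j s where js: "j \<in> {a, b}" "s < csize ns j" "cnum ns j s \<notin> C"
    unfolding two_column_cycle_def by blast
  obtain f where "f \<in> C" using mg_cycle_nonempty[OF C(1)] by blast
  with C(2) obtain j' s' where js': "j' \<in> {a, b}" "s' < csize ns j'" "cnum ns j' s' \<in> C"
    unfolding two_column_cycle_def by blast
  show False
  proof (cases "j' = j")
    case True
    with js js' have "s \<noteq> s'" by auto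
    moreover have "j < length ns" using js(1) ab by auto
    ultimately show False
      using cycle_two_cuts_in_column[OF C(1) CE _ _ js(2) _ _ js(3)] js'(2,3) True by blast
  next
    case False
    define q where "q i = (if i = j' then s' else if i = j then s else 0)" for i
    have outside: "cnum ns i 0 \<notin> C" if "i < length ns" "i \<notin> {a, b}" for i
    proof
      assume "cnum ns i 0 \<in> C"
      with C(2) obtain i' s'' where "i' \<in> {a, b}" "s'' < csize ns i'" "cnum ns i 0 = cnum ns i' s''"
        unfolding two_column_cycle_def by blast
      with that csize_pos[OF that(1)] show False by (auto simp: cnum_eq_iff)
    qed
    have cuts: "\<forall>i<length ns. q i < csize ns i \<and> (i \<noteq> j' \<longrightarrow> cnum ns i (q i) \<notin> C)"
    proof (intro allI impI)
      fix i assume i: "i < length ns"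
      consider "i = j'" | "i = j" | "i \<notin> {a, b}" using js(1) js'(1) False by blast
      then show "q i < csize ns i \<and> (i \<noteq> j' \<longrightarrow> cnum ns i (q i) \<notin> C)"
        by cases (use js js' False outside[OF i] csize_pos[OF i] in \<open>auto simp: q_def\<close>)
    qed
    have "j' < length ns" using js'(1) ab by auto
    from cycle_cuts_in_all_columns[OF C(1) CE cuts this] js'(3) show False by (simp add: q_def)
  qed
qed

lemma fundamental_cycle_other_column:
  assumes c: "(m, r) \<in> configs" and i: "i < length ns" "i \<noteq> m"
  shows "(THE C. C \<subseteq> insert (cnum ns i (r i)) (config_tree m r) \<and> mg_cycle (tait_ends ns) C)
    = two_column_cycle m i"
proof (rule the_equality)
  have m: "m < length ns" and r: "\<And>i. i < length ns \<Longrightarrow> r i < csize ns i"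
    using configsD(1,2)[OF c] by blast+
  show "two_column_cycle m i \<subseteq> insert (cnum ns i (r i)) (config_tree m r)
      \<and> mg_cycle (tait_ends ns) (two_column_cycle m i)"
    using two_column_cycle_is_cycle[OF m i(1)] i cnum_mem_config_tree_iff[of _ _ m r] m
    unfolding two_column_cycle_def by auto
  fix C assume C: "C \<subseteq> insert (cnum ns i (r i)) (config_tree m r) \<and> mg_cycle (tait_ends ns) C"
  then have CE: "C \<subseteq> {1..ncross ns}"
    using config_tree_subset cnum_mem_crossings i r by blast
  have "C \<subseteq> two_column_cycle m i"
  proof
    fix f assume f: "f \<in> C"
    with CE obtain i' s where is': "i' < length ns" "s < csize ns i'" "f = cnum ns i' s"
      by (blast elim: crossing_cnumE)
    show "f \<in> two_column_cycle m i"
    proof (cases "i' = m \<or> i' = i")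
      case True then show ?thesis using is' unfolding two_column_cycle_def by auto
    next
      case False
      then have "s \<noteq> r i'" "cnum ns i' (r i') \<notin> C"
        using f C is' r cnum_mem_config_tree_iff[of i' _ m r] cnum_eq_iff i by auto
      with cycle_two_cuts_in_column[OF conjunct2[OF C] CE is'(1,2) r[OF is'(1)]] is' f show ?thesis
        by auto
    qed
  qed
  with C i m show "C = two_column_cycle m i"
    using cycle_in_two_columns_is_two_column_cycle[of m i C] by auto
qed

text \<open>Crossings of column 0 precede all others, whichever crossing is taken in each column.\<close>
lemma cnum_Min_transversal_iff:
  assumes m: "m < length ns" and q: "\<And>i. i < length ns \<Longrightarrow> q i < csize ns i"
  shows "cnum ns m (q m) = Min {cnum ns i (q i) | i. i < length ns} \<longleftrightarrow> m = 0"
proof -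
  have "cnum ns m (q m) = Min {cnum ns i (q i) | i. i < length ns}
      \<longleftrightarrow> (\<forall>i<length ns. cnum ns m (q m) \<le> cnum ns i (q i))"
    using m by (subst eq_Min_iff) auto
  also have "\<dots> \<longleftrightarrow> m = 0"
  proof
    assume "\<forall>i<length ns. cnum ns m (q m) \<le> cnum ns i (q i)"
    moreover have "m \<noteq> 0 \<Longrightarrow> cnum ns 0 (q 0) < cnum ns m (q m)"
      using cnum_less_cnum_column[of 0 m "q 0" "q m"] q[of 0] q[OF m] m nonempty by simp
    ultimately show "m = 0" using nonempty by fastforce
  next
    assume "m = 0"
    then show "\<forall>i<length ns. cnum ns m (q m) \<le> cnum ns i (q i)"
      using cnum_less_cnum_column[of 0 _ "q 0"] q m by (metis le_refl less_imp_le neq0_conv)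
  qed
  finally show ?thesis .
qed

lemma cnum_Min_pair_iff:
  assumes "i < length ns" "p < csize ns i" "p' < csize ns i" "p \<noteq> p'"
  shows "cnum ns i p = Min {cnum ns i p, cnum ns i p'} \<longleftrightarrow> (if i = 0 then p < p' else p' < p)"
  using assms by (auto simp: min_def cnum_le_cnum_same_column cnum_eq_iff)

lemma cnum_Min_two_column_cycle_iff:
  assumes "m < length ns" "i < length ns" "i \<noteq> m" "p < csize ns i"
  shows "cnum ns i p = Min (two_column_cycle m i) \<longleftrightarrow> i < m \<and> p = lowest_position i"
proof -
  have "cnum ns i p = Min (two_column_cycle m i)
      \<longleftrightarrow> (\<forall>s<csize ns i. cnum ns i p \<le> cnum ns i s) \<and> (\<forall>s<csize ns m. cnum ns i p \<le> cnum ns m s)"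
    using assms(4) by (subst eq_Min_iff) (auto simp: two_column_cycle_def)
  also have "\<dots> \<longleftrightarrow> i < m \<and> p = lowest_position i"
  proof (cases "i < m")
    case True
    then show ?thesis
      using cnum_column_minimal_iff[OF assms(2,4)] cnum_less_cnum_column[of i m p] assms(4)
      by (auto intro: less_imp_le)
  next
    case False
    then have "cnum ns m 0 < cnum ns i p"
      using cnum_less_cnum_column[of m i 0 p] assms csize_pos by simp
    with False show ?thesis using csize_pos[OF assms(1)] by force
  qed
  finally show ?thesis .
qed

lemma tutte_letter_config_tree:
  assumes c: "(m, r) \<in> configs" and ip: "i < length ns" "p < csize ns i"
  shows "tutte_letter (black_regions ns) {1..ncross ns} (tait_ends ns) (neg_cross ns) (config_tree m r) (cnum ns i p)
    = config_letter m r i p"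
proof -
  have m: "m < length ns" and r: "r i < csize ns i"
    using configsD(1,2)[OF c] ip by blast+
  consider "i = m" | "i \<noteq> m" "p \<noteq> r i" | "i \<noteq> m" "p = r i" by blast
  then show ?thesis
  proof cases
    case 1
    have "tutte_letter (black_regions ns) {1..ncross ns} (tait_ends ns) (neg_cross ns) (config_tree m r)
        (cnum ns m p) = config_letter m r m p"
    proof -
      have "(r(m := p)) i' < csize ns i'" if "i' < length ns" for i'
        using configsD(2)[OF c that] ip 1 by simp
      from cnum_Min_transversal_iff[OF m this] c m ip 1 show ?thesis
        unfolding tutte_letter_def reconnecting_full_column[OF c ip(2)[unfolded 1]]
        by (simp add: config_letter_def config_live_def neg_cross_cnum cnum_mem_config_tree_iff)
    qed
    with 1 show ?thesis by simp
  next
    case 2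
    with c ip r show ?thesis
      unfolding tutte_letter_def reconnecting_other_column[OF c ip 2] cnum_Min_pair_iff[OF ip r 2(2)]
      by (auto simp: config_letter_def config_live_def neg_cross_cnum cnum_mem_config_tree_iff)
  next
    case 3
    with c ip m show ?thesis
      unfolding tutte_letter_def
      by (simp add: config_letter_def config_live_def neg_cross_cnum cnum_mem_config_tree_iff
          fundamental_cycle_other_column cnum_Min_two_column_cycle_iff)
  qed
qed

section \<open>Perfect matchings of Gamma\<close>

definition positions :: "(nat \<times> nat) set" where
  "positions = {(i, p). i < length ns \<and> p < csize ns i}"

lemma crossing_positionE:
  assumes "j \<in> {1..ncross ns}"
  obtains i p where "(i, p) \<in> positions" "j = cnum ns i p"
  using assms by (elim crossing_cnumE) (auto simp: positions_def)

lemma corner_reg_eq_Rbot_iff: "corner_reg ns i p c = Rbot \<longleftrightarrow> c = Below \<and> p + 1 = csize ns i"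
  by (cases c) (auto simp: corner_reg_def)

lemma corner_reg_eq_Inside_iff:
  "corner_reg ns i p c = Inside i' t \<longleftrightarrow>
    i' = i \<and> ((c = Below \<and> t = p \<and> p + 1 \<noteq> csize ns i) \<or> (c = Above \<and> 0 < p \<and> t = p - 1))"
  by (cases c) (auto simp: corner_reg_def)

lemma corner_reg_eq_W_iff:
  "corner_reg ns i p c = W j \<longleftrightarrow> (c = Left \<and> 0 < i \<and> j = i - 1) \<or> (c = Right \<and> i + 1 \<noteq> length ns \<and> j = i)"
  by (cases c) (auto simp: corner_reg_def pcols_def)

lemma gamma_region_vertices_eq:
  "gamma_region_vertices ns
    = {Rbot} \<union> {Inside i t | i t. i < length ns \<and> t + 1 < csize ns i} \<union> {W j | j. j + 1 < length ns}"
  by (auto simp: gamma_region_vertices_def regions_def black_regions_def white_regions_def pcols_def)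

lemma corner_reg_mem_gamma_region_vertices:
  "(i, p) \<in> positions \<Longrightarrow> corner_reg ns i p c \<notin> {U, Rtop} \<Longrightarrow> corner_reg ns i p c \<in> gamma_region_vertices ns"
  by (cases c) (auto simp: positions_def corner_reg_def gamma_region_vertices_eq pcols_def split: if_splits)

lemma mem_corner_choice_iff:
  "(i, p) \<in> positions \<Longrightarrow>
    (cnum ns i p, c) \<in> {(cnum ns i' p', ch i' p') | i' p'. (i', p') \<in> positions} \<longleftrightarrow> c = ch i p"
  by (auto simp: positions_def cnum_eq_iff)

lemma perfect_matching_of_bij:
  assumes bij: "bij_betw (\<lambda>(i, p). corner_reg ns i p (ch i p)) positions (gamma_region_vertices ns)"
  shows "{(cnum ns i p, ch i p) | i p. (i, p) \<in> positions} \<in> perfect_matchings ns"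
    (is "?M \<in> _")
proof -
  have region: "creg ns (cnum ns i p) (ch i p) \<in> gamma_region_vertices ns" if "(i, p) \<in> positions" for i p
    using bij_betw_apply[OF bij that] that by (simp add: positions_def creg_cnum)
  have sub: "?M \<subseteq> gamma_edges ns"
    using region cnum_mem_crossings
    by (fastforce simp: gamma_edges_def gamma_region_vertices_def positions_def)
  moreover have cross: "\<forall>j\<in>{1..ncross ns}. \<exists>!c. (j, c) \<in> ?M"
  proof
    fix j assume "j \<in> {1..ncross ns}"
    then obtain i p where ip: "(i, p) \<in> positions" "j = cnum ns i p"
      by (rule crossing_positionE)
    have at_j: "(j, c) \<in> ?M \<longleftrightarrow> c = ch i p" for c
      using ip(1) unfolding ip(2) by (rule mem_corner_choice_iff)
    show "\<exists>!c. (j, c) \<in> ?M" by (rule ex1I[of _ "ch i p"]) (simp_all only: at_j)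
  qed
  moreover have "\<forall>R\<in>gamma_region_vertices ns. \<exists>!e. e \<in> ?M \<and> creg ns (fst e) (snd e) = R"
  proof
    fix R assume R: "R \<in> gamma_region_vertices ns"
    obtain i p where ip: "(i, p) \<in> positions" "corner_reg ns i p (ch i p) = R"
      using bij_betw_imp_surj_on[OF bij] R by force
    show "\<exists>!e. e \<in> ?M \<and> creg ns (fst e) (snd e) = R"
    proof (rule ex1I[of _ "(cnum ns i p, ch i p)"])
      show "(cnum ns i p, ch i p) \<in> ?M \<and> creg ns (fst (cnum ns i p, ch i p)) (snd (cnum ns i p, ch i p)) = R"
        using ip by (auto simp: positions_def creg_cnum)
    next
      fix e assume "e \<in> ?M \<and> creg ns (fst e) (snd e) = R"
      then obtain i' p' where i'p': "(i', p') \<in> positions" "e = (cnum ns i' p', ch i' p')"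
        "corner_reg ns i' p' (ch i' p') = R"
        by (auto simp: positions_def creg_cnum)
      with ip have "(i', p') = (i, p)"
        using inj_onD[OF bij_betw_imp_inj_on[OF bij], of "(i', p')" "(i, p)"] by simp
      with i'p' show "e = (cnum ns i p, ch i p)" by simp
    qed
  qed
  ultimately show ?thesis unfolding perfect_matchings_def by (intro CollectI conjI)
qed

definition matching_corner :: "(nat \<times> corner) set \<Rightarrow> nat \<Rightarrow> nat \<Rightarrow> corner" where
  "matching_corner M i p = (THE c. (cnum ns i p, c) \<in> M)"

lemma matching_corner_iff:
  assumes M: "M \<in> perfect_matchings ns" and ip: "(i, p) \<in> positions"
  shows "(cnum ns i p, c) \<in> M \<longleftrightarrow> c = matching_corner M i p"
proof -
  from ip have "cnum ns i p \<in> {1..ncross ns}"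
    unfolding positions_def using cnum_mem_crossings by blast
  with M have "\<exists>!c. (cnum ns i p, c) \<in> M" unfolding perfect_matchings_def by blast
  then obtain c0 where c0: "(cnum ns i p, c0) \<in> M" "\<And>c. (cnum ns i p, c) \<in> M \<Longrightarrow> c = c0"
    by (elim ex1E) blast
  then have "matching_corner M i p = c0" unfolding matching_corner_def by (rule the_equality)
  with c0 show ?thesis by blast
qed

lemma perfect_matching_eq_corner_choice:
  assumes M: "M \<in> perfect_matchings ns"
  shows "M = {(cnum ns i p, matching_corner M i p) | i p. (i, p) \<in> positions}"
proof (intro equalityI subsetI)
  fix e assume e: "e \<in> M"
  with M obtain j c where "e = (j, c)" "j \<in> {1..ncross ns}"
    by (auto simp: perfect_matchings_def gamma_edges_def)
  moreover from this(2) obtain i p where "(i, p) \<in> positions" "j = cnum ns i p"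
    by (rule crossing_positionE)
  ultimately show "e \<in> {(cnum ns i p, matching_corner M i p) | i p. (i, p) \<in> positions}"
    using e matching_corner_iff[OF M] by auto
qed (use matching_corner_iff[OF M] in auto)

lemma matching_corner_region_mem:
  assumes M: "M \<in> perfect_matchings ns" and ip: "(i, p) \<in> positions"
  shows "corner_reg ns i p (matching_corner M i p) \<in> gamma_region_vertices ns"
proof -
  have "(cnum ns i p, matching_corner M i p) \<in> gamma_edges ns"
    using M matching_corner_iff[OF M ip] unfolding perfect_matchings_def by blast
  with ip show ?thesis
    using corner_reg_mem_gamma_region_vertices by (simp add: gamma_edges_def positions_def creg_cnum)
qed

lemma perfect_matching_corner_bij:
  assumes M: "M \<in> perfect_matchings ns"
  shows "bij_betw (\<lambda>(i, p). corner_reg ns i p (matching_corner M i p)) positions (gamma_region_vertices ns)"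
    (is "bij_betw ?f _ _")
proof -
  let ?e = "\<lambda>i p. (cnum ns i p, matching_corner M i p)"
  have region: "\<forall>R\<in>gamma_region_vertices ns. \<exists>!e. e \<in> M \<and> creg ns (fst e) (snd e) = R"
    using M unfolding perfect_matchings_def by blast
  have creg_eq: "creg ns (fst (?e i p)) (snd (?e i p)) = ?f (i, p)" if "(i, p) \<in> positions" for i p
    using that by (simp add: positions_def creg_cnum)
  have "inj_on ?f positions"
  proof (rule inj_onI, clarify)
    fix i p i' p' assume ip: "(i, p) \<in> positions" "(i', p') \<in> positions"
      and eq: "corner_reg ns i p (matching_corner M i p) = corner_reg ns i' p' (matching_corner M i' p')"
    have "?e i p \<in> M" "?e i' p' \<in> M" using matching_corner_iff[OF M] ip by blast+
    with region matching_corner_region_mem[OF M ip(1)] creg_eq[OF ip(1)] creg_eq[OF ip(2)] eq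
    have "?e i p = ?e i' p'" by (metis (no_types, lifting) case_prod_conv)
    with ip show "i = i' \<and> p = p'" by (auto simp: positions_def cnum_eq_iff)
  qed
  moreover have "?f ` positions = gamma_region_vertices ns"
  proof (intro equalityI subsetI)
    fix R assume "R \<in> ?f ` positions"
    then show "R \<in> gamma_region_vertices ns" using matching_corner_region_mem[OF M] by force
  next
    fix R assume "R \<in> gamma_region_vertices ns"
    with region obtain e where "e \<in> M" "creg ns (fst e) (snd e) = R" by blast
    with perfect_matching_eq_corner_choice[OF M] obtain i p where "(i, p) \<in> positions" "e = ?e i p"
      by blast
    with \<open>creg ns (fst e) (snd e) = R\<close> creg_eq show "R \<in> ?f ` positions" by force
  qed
  ultimately show ?thesis unfolding bij_betw_def ..
qed

definition config_corner :: "nat \<Rightarrow> (nat \<Rightarrow> nat) \<Rightarrow> nat \<Rightarrow> nat \<Rightarrow> corner" where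
  "config_corner m r i p =
     (if p < r i then Below
      else if p = r i then (if i = m then Below else if i < m then Right else Left)
      else Above)"

definition config_matching :: "nat \<Rightarrow> (nat \<Rightarrow> nat) \<Rightarrow> (nat \<times> corner) set" where
  "config_matching m r = {(cnum ns i p, config_corner m r i p) | i p. (i, p) \<in> positions}"

lemma config_corner_region:
  assumes c: "(m, r) \<in> configs" and ip: "(i, p) \<in> positions"
  shows "corner_reg ns i p (config_corner m r i p) =
    (if p < r i then Inside i p
     else if p = r i then (if i = m then Rbot else if i < m then W i else W (i - 1))
     else Inside i (p - 1))"
proof -
  have "r i < csize ns i" "m < length ns" "r m = csize ns m - 1"
    using configsD[OF c] ip by (auto simp: positions_def)
  with ip csize_pos[of m] show ?thesis
    by (auto simp: config_corner_def corner_reg_def positions_def pcols_def)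
qed

lemma config_corner_bij:
  assumes c: "(m, r) \<in> configs"
  shows "bij_betw (\<lambda>(i, p). corner_reg ns i p (config_corner m r i p)) positions (gamma_region_vertices ns)"
proof -
  have m: "m < length ns" and r: "\<And>i. i < length ns \<Longrightarrow> r i < csize ns i"
    and rm: "r m = csize ns m - 1"
    using configsD[OF c] by blast+
  define g where "g R = (case R of
      Inside i t \<Rightarrow> if t < r i then (i, t) else (i, Suc t)
    | W j \<Rightarrow> if j < m then (j, r j) else (Suc j, r (Suc j))
    | _ \<Rightarrow> (m, csize ns m - 1))" for R
  show ?thesis
  proof (rule bij_betw_byWitness[where f' = g])
    show "\<forall>a\<in>positions. g (case a of (i, p) \<Rightarrow> corner_reg ns i p (config_corner m r i p)) = a"
      using m rm by (auto simp: config_corner_region[OF c] g_def positions_def)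
    show "\<forall>R\<in>gamma_region_vertices ns. (case g R of (i, p) \<Rightarrow> corner_reg ns i p (config_corner m r i p)) = R"
      using m rm r csize_pos[OF m] by (auto simp: gamma_region_vertices_eq g_def config_corner_region[OF c] positions_def)
    show "(\<lambda>(i, p). corner_reg ns i p (config_corner m r i p)) ` positions \<subseteq> gamma_region_vertices ns"
    proof clarify
      fix i p assume ip: "(i, p) \<in> positions"
      then have "r i < csize ns i" using r by (simp add: positions_def)
      with ip m rm show "corner_reg ns i p (config_corner m r i p) \<in> gamma_region_vertices ns"
        by (auto simp: config_corner_region[OF c ip] gamma_region_vertices_eq positions_def)
    qed
    show "g ` gamma_region_vertices ns \<subseteq> positions"
      using m r rm csize_pos by (auto simp: gamma_region_vertices_eq g_def positions_def split: if_splits)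
  qed
qed

end

locale pretzel_corner_choice = pretzel_diagram +
  fixes ch :: "nat \<Rightarrow> nat \<Rightarrow> corner"
  assumes bij: "bij_betw (\<lambda>(i, p). corner_reg ns i p (ch i p)) positions (gamma_region_vertices ns)"
begin

lemma chosen_region_inj:
  assumes "(i, p) \<in> positions" "(i', p') \<in> positions"
    and "corner_reg ns i p (ch i p) = corner_reg ns i' p' (ch i' p')"
  shows "i = i' \<and> p = p'"
  using inj_onD[OF bij_betw_imp_inj_on[OF bij], of "(i, p)" "(i', p')"] assms by simp

lemma chosen_regionE:
  assumes "R \<in> gamma_region_vertices ns"
  obtains i p where "(i, p) \<in> positions" "corner_reg ns i p (ch i p) = R"
  using bij_betw_imp_surj_on[OF bij] assms by force

lemma chosen_region_mem:
  "(i, p) \<in> positions \<Longrightarrow> corner_reg ns i p (ch i p) \<in> gamma_region_vertices ns"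
  using bij_betw_apply[OF bij] by fastforce

definition turn :: "nat \<Rightarrow> nat" where
  "turn i = (LEAST p. ch i p \<noteq> Below \<or> p = csize ns i - 1)"

lemma turn_less: "i < length ns \<Longrightarrow> turn i < csize ns i"
  using Least_le[of "\<lambda>p. ch i p \<noteq> Below \<or> p = csize ns i - 1" "csize ns i - 1"] csize_pos[of i]
  unfolding turn_def by linarith

lemma below_turn: "p < turn i \<Longrightarrow> ch i p = Below"
  using not_less_Least[of p "\<lambda>p. ch i p \<noteq> Below \<or> p = csize ns i - 1"] unfolding turn_def by auto

lemma at_turn: "ch i (turn i) \<noteq> Below \<or> turn i = csize ns i - 1"
  unfolding turn_def by (rule LeastI[of _ "csize ns i - 1"]) simp

lemma at_turn_not_Above:
  assumes i: "i < length ns"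
  shows "ch i (turn i) \<noteq> Above"
proof
  assume A: "ch i (turn i) = Above"
  have pos: "(i, turn i) \<in> positions" using turn_less[OF i] i by (simp add: positions_def)
  show False
  proof (cases "turn i = 0")
    case True
    with A chosen_region_mem[OF pos] show False
      by (simp add: corner_reg_def gamma_region_vertices_def)
  next
    case False
    then have "(i, turn i - 1) \<in> positions" "ch i (turn i - 1) = Below"
      using pos below_turn[of "turn i - 1" i] by (auto simp: positions_def)
    with pos A False have "turn i - 1 = turn i"
      using chosen_region_inj[of i "turn i - 1" i "turn i"] turn_less[OF i]
      by (simp add: corner_reg_def)
    with False show False by simp
  qed
qed

text \<open>Each region Inside i p below the turn is matched at one of its two crossings, and the
  upper one is not available.\<close>
lemma above_turn:
  assumes i: "i < length ns"
  shows "turn i < p \<Longrightarrow> p < csize ns i \<Longrightarrow> ch i p = Above"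
proof (induction p)
  case (Suc p)
  have "Inside i p \<in> gamma_region_vertices ns"
    using i Suc.prems by (simp add: gamma_region_vertices_eq)
  then obtain i' p' where ip': "(i', p') \<in> positions" "corner_reg ns i' p' (ch i' p') = Inside i p"
    by (rule chosen_regionE)
  then have "i' = i" and "(ch i p' = Below \<and> p' = p) \<or> (ch i p' = Above \<and> p' = Suc p)"
    by (auto simp: corner_reg_eq_Inside_iff)
  moreover have "ch i p \<noteq> Below"
    using Suc at_turn[of i] by (cases "p = turn i") auto
  ultimately show ?case by auto
qed simp

lemma sideways_at_turn:
  assumes "(i, p) \<in> positions" "ch i p = Left \<or> ch i p = Right"
  shows "p = turn i"
  using assms below_turn[of p i] above_turn[of i p]
  by (cases p "turn i" rule: linorder_cases) (auto simp: positions_def)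

lemma bottom_columnE:
  obtains m where "m < length ns" "ch m (turn m) = Below" "turn m = csize ns m - 1"
proof -
  have "Rbot \<in> gamma_region_vertices ns" by (simp add: gamma_region_vertices_eq)
  then obtain m p where mp: "(m, p) \<in> positions" "corner_reg ns m p (ch m p) = Rbot"
    by (rule chosen_regionE)
  then have m: "m < length ns" and B: "ch m p = Below" "p = csize ns m - 1"
    by (auto simp: positions_def corner_reg_eq_Rbot_iff)
  have "\<not> turn m < p" using above_turn[OF m, of p] mp B by (auto simp: positions_def)
  with turn_less[OF m] B(2) have "p = turn m" by linarith
  with m B that show ?thesis by simp
qed

context
  fixes m assumes m: "m < length ns" "ch m (turn m) = Below" "turn m = csize ns m - 1"
begin

lemma sideways_off_bottom:
  assumes i: "i < length ns" "i \<noteq> m"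
  shows "ch i (turn i) = Left \<or> ch i (turn i) = Right"
proof (rule ccontr)
  assume "\<not> ?thesis"
  with at_turn_not_Above[OF i(1)] have "ch i (turn i) = Below"
    by (cases "ch i (turn i)") auto
  with at_turn[of i] have "corner_reg ns i (turn i) (ch i (turn i)) = Rbot"
    using csize_pos[OF i(1)] by (auto simp: corner_reg_eq_Rbot_iff)
  moreover have "corner_reg ns m (turn m) (ch m (turn m)) = Rbot"
    using m csize_pos[OF m(1)] by (simp add: corner_reg_eq_Rbot_iff)
  ultimately show False
    using chosen_region_inj[of i "turn i" m "turn m"] turn_less i m(1) by (auto simp: positions_def)
qed

lemma white_region_matched:
  assumes "Suc j < length ns"
  shows "ch j (turn j) = Right \<or> ch (Suc j) (turn (Suc j)) = Left"
proof -
  have "W j \<in> gamma_region_vertices ns" using assms by (simp add: gamma_region_vertices_eq)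
  then obtain a p where ap: "(a, p) \<in> positions" "corner_reg ns a p (ch a p) = W j"
    by (rule chosen_regionE)
  then have "(ch a p = Left \<and> a = Suc j) \<or> (ch a p = Right \<and> a = j)"
    by (auto simp: corner_reg_eq_W_iff)
  with sideways_at_turn[OF ap(1)] show ?thesis by auto
qed

lemma turn_Left_right_of_bottom: "m < i \<Longrightarrow> i < length ns \<Longrightarrow> ch i (turn i) = Left"
proof (induction i)
  case (Suc i)
  have "ch i (turn i) \<noteq> Right"
    using Suc m(2) by (cases "i = m") auto
  with white_region_matched[OF Suc.prems(2)] show ?case by auto
qed simp

lemma turn_Right_left_of_bottom: "i < m \<Longrightarrow> ch i (turn i) = Right"
proof (induction "m - i" arbitrary: i)
  case (Suc d)
  have "ch (Suc i) (turn (Suc i)) \<noteq> Left"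
    using Suc m(2) by (cases "Suc i = m") auto
  with white_region_matched[of i] Suc.prems m(1) show ?case by auto
qed simp

lemma corner_choice_eq_config_corner:
  assumes "(i, p) \<in> positions"
  shows "ch i p = config_corner m (\<lambda>i. if i < length ns then turn i else 0) i p"
  using assms below_turn[of p i] above_turn[of i p] m(2) sideways_off_bottom[of i]
    turn_Left_right_of_bottom[of i] turn_Right_left_of_bottom[of i]
  by (cases p "turn i" rule: linorder_cases) (auto simp: positions_def config_corner_def)

end

lemma corner_choice_configE:
  obtains m r where "(m, r) \<in> configs" "\<And>i p. (i, p) \<in> positions \<Longrightarrow> ch i p = config_corner m r i p"
proof -
  obtain m where m: "m < length ns" "ch m (turn m) = Below" "turn m = csize ns m - 1"
    by (rule bottom_columnE)
  then have "(m, \<lambda>i. if i < length ns then turn i else 0) \<in> configs"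
    using turn_less by (auto simp: configs_def)
  with corner_choice_eq_config_corner[OF m] that show ?thesis by blast
qed

end

context pretzel_diagram
begin

lemma perfect_matchings_eq: "perfect_matchings ns = (\<lambda>(m, r). config_matching m r) ` configs"
proof (intro equalityI subsetI)
  fix M assume M: "M \<in> perfect_matchings ns"
  interpret pretzel_corner_choice ns "matching_corner M"
    using perfect_matching_corner_bij[OF M] by unfold_locales
  obtain m r where c: "(m, r) \<in> configs"
    and eq: "\<And>i p. (i, p) \<in> positions \<Longrightarrow> matching_corner M i p = config_corner m r i p"
    using corner_choice_configE by metis
  have "M = config_matching m r"
    unfolding config_matching_def by (subst perfect_matching_eq_corner_choice[OF M]) (intro Collect_cong; metis eq)
  with c show "M \<in> (\<lambda>(m, r). config_matching m r) ` configs"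
    by (intro image_eqI[where x = "(m, r)"]) simp_all
next
  fix M assume "M \<in> (\<lambda>(m, r). config_matching m r) ` configs"
  then show "M \<in> perfect_matchings ns"
    using perfect_matching_of_bij[OF config_corner_bij] by (auto simp: config_matching_def)
qed

lemma inj_on_config_matching: "inj_on (\<lambda>(m, r). config_matching m r) configs"
proof (rule inj_onI, clarify)
  fix m r m' r' assume c: "(m, r) \<in> configs" "(m', r') \<in> configs"
    and eq: "config_matching m r = config_matching m' r'"
  note cD = configsD[OF c(1)] configsD[OF c(2)]
  have corner: "config_corner m r i p = config_corner m' r' i p" if "(i, p) \<in> positions" for i p
    using eq mem_corner_choice_iff[OF that, of "config_corner m r i p" "config_corner m r"]
      mem_corner_choice_iff[OF that, of "config_corner m r i p" "config_corner m' r'"]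
    unfolding config_matching_def by simp
  have "m = m'"
  proof (rule ccontr)
    assume "m \<noteq> m'"
    moreover have "(m, csize ns m - 1) \<in> positions" using cD csize_pos by (simp add: positions_def)
    moreover have "r' m < csize ns m" using configsD(2)[OF c(2) cD(1)] .
    ultimately show False
      using corner[of m "csize ns m - 1"] cD(3) by (auto simp: config_corner_def split: if_splits)
  qed
  moreover have "r i = r' i" for i
  proof (cases "i < length ns \<and> i \<noteq> m")
    case True
    then have "(i, r i) \<in> positions" using cD by (simp add: positions_def)
    from corner[OF this] True \<open>m = m'\<close> show ?thesis
      by (auto simp: config_corner_def split: if_splits)
  next
    case False
    with c \<open>m = m'\<close> show ?thesis by (auto simp: configs_def)
  qed
  ultimately show "m = m' \<and> r = r'" by (simp add: fun_eq_iff)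
qed

section \<open>Activity weights\<close>

abbreviation incident_crossings :: "region \<Rightarrow> nat set" where
  "incident_crossings R \<equiv> {j \<in> {1..ncross ns}. \<exists>c. creg ns j c = R}"

lemma incident_crossings_eq:
  "incident_crossings R = {cnum ns i p | i p. (i, p) \<in> positions \<and> (\<exists>c. corner_reg ns i p c = R)}"
proof (intro equalityI subsetI)
  fix j assume "j \<in> incident_crossings R"
  then obtain c where j: "j \<in> {1..ncross ns}" "creg ns j c = R" by blast
  from j(1) obtain i p where "(i, p) \<in> positions" "j = cnum ns i p" by (rule crossing_positionE)
  with j(2) show "j \<in> {cnum ns i p | i p. (i, p) \<in> positions \<and> (\<exists>c. corner_reg ns i p c = R)}"
    by (auto simp: positions_def creg_cnum)
next
  fix j assume "j \<in> {cnum ns i p | i p. (i, p) \<in> positions \<and> (\<exists>c. corner_reg ns i p c = R)}"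
  then obtain i p c where ip: "i < length ns" "p < csize ns i" "j = cnum ns i p" "corner_reg ns i p c = R"
    by (auto simp: positions_def)
  then have "j \<in> {1..ncross ns}" "creg ns j c = R"
    using cnum_mem_crossings[of i p] creg_cnum[of i p c] by simp_all
  then show "j \<in> incident_crossings R" by blast
qed

lemma incident_crossings_Inside:
  assumes "i < length ns" "Suc t < csize ns i"
  shows "incident_crossings (Inside i t) = {cnum ns i t, cnum ns i (Suc t)}"
  unfolding incident_crossings_eq using assms
  by (auto simp: positions_def corner_reg_eq_Inside_iff) (force intro!: exI[where x = t])

lemma incident_crossings_Rbot:
  "incident_crossings Rbot = {cnum ns i (csize ns i - 1) | i. i < length ns}"
  unfolding incident_crossings_eq using csize_pos
  by (auto simp: positions_def corner_reg_eq_Rbot_iff) (metis Suc_pred diff_Suc_1 lessI)+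

lemma incident_crossings_W:
  assumes "Suc j < length ns"
  shows "incident_crossings (W j) = two_column_cycle j (Suc j)"
  unfolding incident_crossings_eq using assms
  by (auto simp: positions_def corner_reg_eq_W_iff two_column_cycle_def) fastforce+

lemma lowest_incident_Inside:
  assumes "i < length ns" "Suc t < csize ns i"
  shows "cnum ns i t = Min (incident_crossings (Inside i t)) \<longleftrightarrow> i = 0"
    and "cnum ns i (Suc t) = Min (incident_crossings (Inside i t)) \<longleftrightarrow> i \<noteq> 0"
  unfolding incident_crossings_Inside[OF assms]
  using cnum_Min_pair_iff[of i t "Suc t"] cnum_Min_pair_iff[of i "Suc t" t] assms
  by (simp_all add: insert_commute)

lemma lowest_incident_Rbot:
  "m < length ns \<Longrightarrow> cnum ns m (csize ns m - 1) = Min (incident_crossings Rbot) \<longleftrightarrow> m = 0"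
  unfolding incident_crossings_Rbot using cnum_Min_transversal_iff[of m "\<lambda>i. csize ns i - 1"] csize_pos
  by simp

lemma lowest_incident_W:
  assumes "Suc j < length ns"
  shows "p < csize ns j \<Longrightarrow> cnum ns j p = Min (incident_crossings (W j)) \<longleftrightarrow> p = lowest_position j"
    and "p < csize ns (Suc j) \<Longrightarrow> cnum ns (Suc j) p \<noteq> Min (incident_crossings (W j))"
  unfolding incident_crossings_W[OF assms]
  using cnum_Min_two_column_cycle_iff[of "Suc j" j p] cnum_Min_two_column_cycle_iff[of j "Suc j" p] assms
  by (simp_all add: two_column_cycle_commute[of j])

lemma alpha_edge_config_corner:
  assumes c: "(m, r) \<in> configs" and ip: "(i, p) \<in> positions"
  shows "alpha_edge ns (cnum ns i p, config_corner m r i p) = config_letter m r i p"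
proof -
  have i: "i < length ns" "p < csize ns i" using ip by (simp_all add: positions_def)
  have m: "m < length ns" and r: "r i < csize ns i" and rm: "r m = csize ns m - 1"
    using configsD[OF c] i by blast+
  have letter: "alpha_edge ns (cnum ns i p, config_corner m r i p)
      = Letter (R \<in> black_regions ns) (cnum ns i p = Min (incident_crossings R)) (ns ! i < 0)"
    if "R = corner_reg ns i p (config_corner m r i p)" for R
    using i that by (simp add: alpha_edge_def Let_def creg_cnum neg_cross_cnum)
  consider "p < r i" | "p = r i" "i = m" | "p = r i" "i < m" | "p = r i" "m < i" | "r i < p"
    by linarith
  then show ?thesis
  proof cases
    case 1
    with i r show ?thesis
      using letter[OF config_corner_region[OF c ip, symmetric]] lowest_incident_Inside(1)[of i p]
      by (simp add: black_regions_def pcols_def config_letter_def config_live_def)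
  next
    case 2
    with m rm show ?thesis
      using letter[OF config_corner_region[OF c ip, symmetric]] lowest_incident_Rbot[OF m]
      by (simp add: black_regions_def config_letter_def config_live_def)
  next
    case 3
    with i m show ?thesis
      using letter[OF config_corner_region[OF c ip, symmetric]] lowest_incident_W(1)[of i p]
      by (simp add: black_regions_def config_letter_def config_live_def)
  next
    case 4
    with i show ?thesis
      using letter[OF config_corner_region[OF c ip, symmetric]] lowest_incident_W(2)[of "i - 1" p]
      by (simp add: black_regions_def config_letter_def config_live_def)
  next
    case 5
    moreover have "i \<noteq> m" using 5 i rm by auto
    ultimately show ?thesis using i
      using letter[OF config_corner_region[OF c ip, symmetric]] lowest_incident_Inside(2)[of i "p - 1"]
      by (simp add: black_regions_def pcols_def config_letter_def config_live_def)
  qed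
qed

lemma alpha_word_config_matching:
  assumes c: "(m, r) \<in> configs"
  shows "alpha_word ns (config_matching m r) = activity_word ns (config_tree m r)"
  unfolding alpha_word_def activity_word_def
proof (rule map_cong[OF refl])
  fix j assume "j \<in> set [1..<ncross ns + 1]"
  then have "j \<in> {1..ncross ns}" by auto
  then obtain i p where ip: "(i, p) \<in> positions" "j = cnum ns i p" by (rule crossing_positionE)
  have "(THE c. (j, c) \<in> config_matching m r) = config_corner m r i p"
    unfolding config_matching_def ip(2) mem_corner_choice_iff[OF ip(1)] by simp
  with ip show "alpha_edge ns (j, THE c. (j, c) \<in> config_matching m r)
      = tutte_letter (black_regions ns) {1..ncross ns} (tait_ends ns) (neg_cross ns) (config_tree m r) j"
    using alpha_edge_config_corner[OF c ip(1)] tutte_letter_config_tree[OF c] by (simp add: positions_def)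
qed

end

theorem mainTheorem5:
  fixes ns :: "int list"
  assumes "ns \<noteq> []"
    and "\<forall>x\<in>set ns. x \<noteq> 0"
    and "one_component ns"
  shows "image_mset (alpha_word ns) (mset_set (perfect_matchings ns))
       = image_mset (activity_word ns) (mset_set (tait_spanning_trees ns))"
proof -
  interpret pretzel_diagram ns using assms(1,2) by unfold_locales
  have "image_mset (alpha_word ns) (mset_set (perfect_matchings ns))
      = image_mset (\<lambda>(m, r). alpha_word ns (config_matching m r)) (mset_set configs)"
    unfolding perfect_matchings_eq image_mset_mset_set[OF inj_on_config_matching, symmetric]
    by (simp add: multiset.map_comp comp_def case_prod_unfold)
  also have "\<dots> = image_mset (\<lambda>(m, r). activity_word ns (config_tree m r)) (mset_set configs)"
  proof (rule image_mset_cong)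
    fix c assume "c \<in># mset_set configs"
    then have "c \<in> configs" by (cases "finite configs") auto
    then show "(\<lambda>(m, r). alpha_word ns (config_matching m r)) c = (\<lambda>(m, r). activity_word ns (config_tree m r)) c"
      by (cases c) (simp add: alpha_word_config_matching)
  qed
  also have "\<dots> = image_mset (activity_word ns) (mset_set (tait_spanning_trees ns))"
    unfolding tait_spanning_trees_eq image_mset_mset_set[OF inj_on_config_tree, symmetric]
    by (simp add: multiset.map_comp comp_def case_prod_unfold)
  finally show ?thesis .
qed

end
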